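(* Let $n\ge 2$ and let $f:\{0,1\}^n\to\{0,1\}$ be written in the form $f(x_1,\dots,x_n)=\bigoplus_{I\subseteq\{1,\dots,n\}} a_I\bigwedge_{i\in I}x_i$ with $a_I\in\{0,1\}$. Let $\mathcal J=\{I\subseteq\{1,\dots,n\}: a_I=1,\ |I|\ge 2\}$ and suppose $n_{\mathcal J}=1$. Then the number $N^{scratch}_{comm}$ of one-way communication channels needed to simulate the full-correlation box associated to $f$ from scratch is $$N^{scratch}_{comm}=\Big|\bigcup_{I\in\mathcal J} I\Big|-1.$$
   Context: The full-correlation box associated to a Boolean function $f$ of $n$ inputs is the $n$-partite box with binary inputs $\vec x=(x_1,\dots,x_n)$ and binary outputs $\vec a=(a_1,\dots,a_n)$ given by $P(\vec a\mid\vec x)=2^{-(n-1)}$ if $\bigoplus_i a_i=f(\vec x)$ and $0$ otherwise. $n_{\mathcal J}$ denotes the maximal number of blocks in a partition $\{J_1,\dots,J_{n_{\mathcal J}}\}$ of $\mathcal J$ such that $A\cap B=\emptyset$ whenever $A\in J_i$, $B\in J_j$, $i\ne j$ (so $n_{\mathcal J}=1$ means the sets in $\mathcal J$ are connected under the relation of having nonempty intersection). Simulating a box from scratch means that the $n$ parties, using only shared randomness, local operations, and a set of one-way classical communication channels (each an ordered pair of parties, usable arbitrarily often), produce outputs with exactly the box's conditional distribution; $N^{scratch}_{comm}$ is the number of such channels required. *)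

theory Defs
  imports "HOL-Probability.Probability_Mass_Function"
begin

text \<open>Parties are indexed 0..n-1. Inputs and outputs are functions nat => bool,
  only the values at indices below n matter.\<close>

definition anf_eval :: "nat \<Rightarrow> (nat set \<Rightarrow> bool) \<Rightarrow> (nat \<Rightarrow> bool) \<Rightarrow> bool" where
  "anf_eval n c x = odd (card {I. I \<subseteq> {0..<n} \<and> c I \<and> (\<forall>i\<in>I. x i)})"

definition monomials_J :: "nat \<Rightarrow> (nat set \<Rightarrow> bool) \<Rightarrow> nat set set" where
  "monomials_J n c = {I. I \<subseteq> {0..<n} \<and> c I \<and> card I \<ge> 2}"

definition disjoint_block_partition :: "'a set set \<Rightarrow> 'a set set set \<Rightarrow> bool" where
  "disjoint_block_partition J P \<longleftrightarrow>
     (\<forall>B\<in>P. B \<noteq> {}) \<and> \<Union>P = J \<and>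
     (\<forall>B1\<in>P. \<forall>B2\<in>P. B1 \<noteq> B2 \<longrightarrow> B1 \<inter> B2 = {}) \<and>
     (\<forall>B1\<in>P. \<forall>B2\<in>P. B1 \<noteq> B2 \<longrightarrow> (\<forall>A\<in>B1. \<forall>A'\<in>B2. A \<inter> A' = {}))"

definition n_J :: "'a set set \<Rightarrow> nat" where
  "n_J J = Max (card ` {P. disjoint_block_partition J P})"

definition fc_box :: "nat \<Rightarrow> ((nat \<Rightarrow> bool) \<Rightarrow> bool) \<Rightarrow> (nat \<Rightarrow> bool) \<Rightarrow> (nat \<Rightarrow> bool) \<Rightarrow> real" where
  "fc_box n f a x = (if odd (card {j. j < n \<and> a j}) = f x then 1 / 2 ^ (n - 1) else 0)"

text \<open>Simulation from scratch with channel set C (pairs (i,j): i may send to j, arbitrarily often).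
  With shared randomness, local operations and arbitrarily many rounds of communication,
  the achievable behaviours are exactly mixtures (by shared randomness) of deterministic
  strategy profiles in which the output of party j depends only on the inputs of parties
  from which j is reachable in the channel graph (including j itself).\<close>
definition simulates_from_scratch ::
  "nat \<Rightarrow> (nat \<times> nat) set \<Rightarrow> ((nat \<Rightarrow> bool) \<Rightarrow> (nat \<Rightarrow> bool) \<Rightarrow> real) \<Rightarrow> bool" where
  "simulates_from_scratch n C P \<longleftrightarrow>
     (\<exists>\<mu> :: (nat \<Rightarrow> (nat \<Rightarrow> bool) \<Rightarrow> bool) pmf.
        (\<forall>g\<in>set_pmf \<mu>. \<forall>j<n. \<forall>x y. (\<forall>k. (k, j) \<in> C\<^sup>* \<longrightarrow> x k = y k) \<longrightarrow> g j x = g j y) \<and>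
        (\<forall>a x. measure_pmf.prob \<mu> {g. \<forall>j<n. g j x = a j} = P a x))"

definition channels :: "nat \<Rightarrow> (nat \<times> nat) set" where
  "channels n = {(i, j). i < n \<and> j < n \<and> i \<noteq> j}"

definition N_scratch_comm :: "nat \<Rightarrow> ((nat \<Rightarrow> bool) \<Rightarrow> (nat \<Rightarrow> bool) \<Rightarrow> real) \<Rightarrow> nat" where
  "N_scratch_comm n P = (LEAST k. \<exists>C. C \<subseteq> channels n \<and> card C = k \<and> simulates_from_scratch n C P)"

end

theory Submission
  imports Defs
begin

text \<open>Lower bound: some deterministic strategy in the support of a simulation already
  reproduces the box, and the outputs of the parties in a connected component K of the channel
  graph depend only on the inputs in K. The output parity f is therefore the XOR of a function
  of the inputs in K and a function of the inputs outside K, so its mixed second difference in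
  a \<in> K, b \<notin> K vanishes. But at a smallest monomial of f containing both a and b this
  second difference is odd, so no monomial crosses a component; connectedness of J then puts all of
  \<Union>J into one component, which has at most (number of channels + 1) vertices.

  Upper bound: with channels from the rest of \<Union>J into one party r of it, the parties XOR-share
  the value of f: each party outside r outputs its linear term masked by a shared random bit,
  and r outputs the remaining part of f, which depends only on inputs it receives, masked by the
  parity of all these bits.\<close>

definition local_strategy ::
  "nat \<Rightarrow> (nat \<times> nat) set \<Rightarrow> (nat \<Rightarrow> (nat \<Rightarrow> bool) \<Rightarrow> bool) \<Rightarrow> bool" where
  "local_strategy n C g \<longleftrightarrow>
     (\<forall>j<n. \<forall>x y. (\<forall>k. (k, j) \<in> C\<^sup>* \<longrightarrow> x k = y k) \<longrightarrow> g j x = g j y)"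

lemma simulates_from_scratch_iff:
  "simulates_from_scratch n C P \<longleftrightarrow>
     (\<exists>\<mu>. (\<forall>g\<in>set_pmf \<mu>. local_strategy n C g) \<and>
          (\<forall>a x. measure_pmf.prob \<mu> {g. \<forall>j<n. g j x = a j} = P a x))"
  unfolding simulates_from_scratch_def local_strategy_def ..

lemma card_sym_rtrancl_Image_le:
  assumes "finite C" "finite S"
  shows "finite ((C \<union> C\<inverse>)\<^sup>* `` S) \<and> card ((C \<union> C\<inverse>)\<^sup>* `` S) \<le> card S + card C"
  using assms
proof (induction C arbitrary: S rule: finite_induct)
  case empty
  then show ?case by simp
next
  case (insert e C)
  obtain a b where e: "e = (a, b)" by fastforce
  let ?E = "C \<union> C\<inverse>"
  let ?E' = "insert e C \<union> (insert e C)\<inverse>"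
  have reach_mono: "?E'\<^sup>* `` S \<subseteq> ?E\<^sup>* `` T"
    if "S \<subseteq> T" and "a \<in> ?E\<^sup>* `` T \<longleftrightarrow> b \<in> ?E\<^sup>* `` T" for T
  proof -
    have "?E' `` (?E\<^sup>* `` T) \<subseteq> ?E\<^sup>* `` T"
      using that(2) e by (auto intro: rtrancl_into_rtrancl)
    then have "?E'\<^sup>* `` (?E\<^sup>* `` T) = ?E\<^sup>* `` T" by (rule Image_closed_trancl)
    moreover have "S \<subseteq> ?E\<^sup>* `` T" using that(1) by auto
    ultimately show ?thesis by (metis Image_mono order_refl)
  qed
  have card_e: "card (insert e C) = card C + 1" using insert.hyps by simp
  show ?case
  proof (cases "a \<in> ?E\<^sup>* `` S \<longleftrightarrow> b \<in> ?E\<^sup>* `` S")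
    case True
    then have "?E'\<^sup>* `` S \<subseteq> ?E\<^sup>* `` S" by (intro reach_mono) auto
    moreover have "finite (?E\<^sup>* `` S)" "card (?E\<^sup>* `` S) \<le> card S + card C"
      using insert.IH[OF insert.prems] by auto
    ultimately show ?thesis using card_e card_mono[of "?E\<^sup>* `` S" "?E'\<^sup>* `` S"]
      by (auto intro: finite_subset)
  next
    case False
    then obtain w where w: "w \<notin> ?E\<^sup>* `` S" "{a, b} \<subseteq> ?E\<^sup>* `` S \<union> {w}" by blast
    have "{a, b} \<subseteq> ?E\<^sup>* `` insert w S" using w(2) by auto
    then have "?E'\<^sup>* `` S \<subseteq> ?E\<^sup>* `` insert w S" by (intro reach_mono) auto
    moreover have "finite (?E\<^sup>* `` insert w S)" "card (?E\<^sup>* `` insert w S) \<le> card (insert w S) + card C"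
      using insert.IH[of "insert w S"] insert.prems by auto
    moreover have "card (insert w S) \<le> card S + 1"
      using insert.prems by (simp add: card_insert_if)
    ultimately show ?thesis using card_e card_mono[of "?E\<^sup>* `` insert w S" "?E'\<^sup>* `` S"]
      by (auto intro: finite_subset)
  qed
qed

lemma local_strategy_outputs_cong:
  assumes "local_strategy n C g" and "(C \<union> C\<inverse>) `` K \<subseteq> K" and "\<forall>k\<in>K. x k = y k"
  shows "{j. j < n \<and> j \<in> K \<and> g j x} = {j. j < n \<and> j \<in> K \<and> g j y}"
proof -
  have "(C \<union> C\<inverse>)\<^sup>* `` K = K" using assms(2) by (rule Image_closed_trancl)
  moreover have "(j, k) \<in> (C \<union> C\<inverse>)\<^sup>*" if "(k, j) \<in> C\<^sup>*" for j k
    using rtrancl_mono[of "C\<inverse>" "C \<union> C\<inverse>"] that by (auto simp: rtrancl_converse)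
  ultimately have "k \<in> K" if "j \<in> K" "(k, j) \<in> C\<^sup>*" for j k
    using that by blast
  then show ?thesis
    using assms(1,3) unfolding local_strategy_def by blast
qed

lemma card_Collect_split:
  fixes n :: nat
  shows "card {j. j < n \<and> P j} = card {j. j < n \<and> j \<in> K \<and> P j} + card {j. j < n \<and> j \<in> - K \<and> P j}"
proof -
  have "{j. j < n \<and> P j} = {j. j < n \<and> j \<in> K \<and> P j} \<union> {j. j < n \<and> j \<in> - K \<and> P j}"
    by auto
  moreover have "finite {j. j < n \<and> j \<in> L \<and> P j}" for L
    by (rule finite_subset[of _ "{..<n}"]) auto
  ultimately show ?thesis by (simp add: card_Un_disjoint disjoint_iff)
qed

lemma local_strategy_second_difference:
  assumes "local_strategy n C g" and closed: "(C \<union> C\<inverse>) `` K \<subseteq> K" and "a \<in> K" "b \<notin> K"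
  defines "par \<equiv> \<lambda>X. odd (card {j. j < n \<and> g j (\<lambda>i. i \<in> X)})"
  shows "(par X = par (X - {a})) = (par (X - {b}) = par (X - {a, b}))"
proof -
  define count where "count L X = card {j. j < n \<and> j \<in> L \<and> g j (\<lambda>i. i \<in> X)}" for L X
  have cong: "count L X = count L Y"
    if "(C \<union> C\<inverse>) `` L \<subseteq> L" "\<forall>k\<in>L. (k \<in> X) = (k \<in> Y)" for L X Y
    using local_strategy_outputs_cong[OF assms(1) that(1), of "\<lambda>i. i \<in> X" "\<lambda>i. i \<in> Y"] that(2)
    unfolding count_def by simp
  have closed_compl: "(C \<union> C\<inverse>) `` (- K) \<subseteq> - K" using closed by blast
  have "count K X = count K (X - {b})" "count K (X - {a}) = count K (X - {a, b})"
    using \<open>b \<notin> K\<close> by (auto intro!: cong[OF closed])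
  moreover have "count (- K) X = count (- K) (X - {a})"
    "count (- K) (X - {b}) = count (- K) (X - {a, b})"
    using \<open>a \<in> K\<close> by (auto intro!: cong[OF closed_compl])
  moreover have "par Y = odd (count K Y + count (- K) Y)" for Y
    unfolding par_def count_def by (subst card_Collect_split[of _ _ K]) (rule refl)
  ultimately show ?thesis by presburger
qed

definition monomials_below :: "nat \<Rightarrow> (nat set \<Rightarrow> bool) \<Rightarrow> nat set \<Rightarrow> nat set set" where
  "monomials_below n c X = {I. I \<subseteq> {0..<n} \<and> c I \<and> I \<subseteq> X}"

lemma finite_monomials_below: "finite (monomials_below n c X)"
  unfolding monomials_below_def by (rule finite_subset[of _ "Pow {0..<n}"]) auto

lemma anf_eval_indicator: "anf_eval n c (\<lambda>i. i \<in> X) = odd (card (monomials_below n c X))"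
  unfolding anf_eval_def monomials_below_def by (simp add: subset_eq)

text \<open>Inclusion-exclusion on the monomials below M, where M is a smallest monomial
  containing both a and b: M itself is the only one containing both.\<close>
lemma card_monomials_below_minimal:
  assumes M: "M \<subseteq> {0..<n}" "c M" "a \<in> M" "b \<in> M" "a \<noteq> b"
    and minimal: "\<And>S. S \<subseteq> {0..<n} \<Longrightarrow> c S \<Longrightarrow> a \<in> S \<Longrightarrow> b \<in> S \<Longrightarrow> card M \<le> card S"
  shows "card (monomials_below n c M) + card (monomials_below n c (M - {a, b})) =
         card (monomials_below n c (M - {a})) + card (monomials_below n c (M - {b})) + 1"
proof -
  let ?Q = "monomials_below n c"
  have "S = M" if "S \<in> ?Q M" "a \<in> S" "b \<in> S" for S
  proof -
    have "S \<subseteq> M" "card M \<le> card S"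
      using that minimal unfolding monomials_below_def by auto
    then show ?thesis using M(1) card_seteq[of M S] finite_subset by blast
  qed
  then have "?Q M = insert M (?Q (M - {a}) \<union> ?Q (M - {b}))"
    using M unfolding monomials_below_def by blast
  moreover have "M \<notin> ?Q (M - {a}) \<union> ?Q (M - {b})"
    using M unfolding monomials_below_def by auto
  moreover have "?Q (M - {a}) \<inter> ?Q (M - {b}) = ?Q (M - {a, b})"
    unfolding monomials_below_def by auto
  ultimately show ?thesis
    using card_Un_Int[OF finite_monomials_below finite_monomials_below]
    by (simp add: finite_monomials_below)
qed

lemma anf_eval_odd_second_difference:
  assumes "I \<subseteq> {0..<n}" "c I" "a \<in> I" "b \<in> I" "a \<noteq> b"
  obtains M where
    "(anf_eval n c (\<lambda>i. i \<in> M) = anf_eval n c (\<lambda>i. i \<in> M - {a})) \<noteq>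
     (anf_eval n c (\<lambda>i. i \<in> M - {b}) = anf_eval n c (\<lambda>i. i \<in> M - {a, b}))"
proof -
  let ?P = "\<lambda>S. S \<subseteq> {0..<n} \<and> c S \<and> a \<in> S \<and> b \<in> S"
  obtain M where "?P M" and "\<forall>S. ?P S \<longrightarrow> card M \<le> card S"
    using ex_has_least_nat[of ?P I card] assms by blast
  then have card_eq: "card (monomials_below n c M) + card (monomials_below n c (M - {a, b})) =
             card (monomials_below n c (M - {a})) + card (monomials_below n c (M - {b})) + 1"
    using \<open>a \<noteq> b\<close> by (intro card_monomials_below_minimal) auto
  have parity: "(odd p = odd q) \<noteq> (odd r = odd s)" if "p + s = q + r + 1" for p q r s :: nat
    using that by presburger
  from parity[OF card_eq] show ?thesis
    unfolding anf_eval_indicator[symmetric] by (rule that)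
qed

lemma monomial_not_crossing_cut:
  assumes "local_strategy n C g" and computes: "\<forall>x. odd (card {j. j < n \<and> g j x}) = anf_eval n c x"
    and "(C \<union> C\<inverse>) `` K \<subseteq> K" and "I \<subseteq> {0..<n}" "c I"
  shows "I \<subseteq> K \<or> I \<inter> K = {}"
proof (rule ccontr)
  assume "\<not> (I \<subseteq> K \<or> I \<inter> K = {})"
  then obtain a b where "a \<in> I" "a \<in> K" "b \<in> I" "b \<notin> K" by blast
  then obtain M where
    "(anf_eval n c (\<lambda>i. i \<in> M) = anf_eval n c (\<lambda>i. i \<in> M - {a})) \<noteq>
     (anf_eval n c (\<lambda>i. i \<in> M - {b}) = anf_eval n c (\<lambda>i. i \<in> M - {a, b}))"
    using anf_eval_odd_second_difference[of I n c a b] assms(4,5) by blast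
  moreover have "(anf_eval n c (\<lambda>i. i \<in> M) = anf_eval n c (\<lambda>i. i \<in> M - {a})) =
     (anf_eval n c (\<lambda>i. i \<in> M - {b}) = anf_eval n c (\<lambda>i. i \<in> M - {a, b}))"
    using local_strategy_second_difference[OF assms(1,3) \<open>a \<in> K\<close> \<open>b \<notin> K\<close>]
    unfolding computes[rule_format] .
  ultimately show False by blast
qed

text \<open>Any strategy in the support works, since fc_box vanishes off the parity constraint.\<close>
lemma simulates_from_scratch_imp_local_strategy:
  assumes "simulates_from_scratch n C (fc_box n f)"
  obtains g where "local_strategy n C g" and "\<forall>x. odd (card {j. j < n \<and> g j x}) = f x"
proof -
  obtain \<mu> where local: "\<forall>g\<in>set_pmf \<mu>. local_strategy n C g"
    and prob: "\<forall>a x. measure_pmf.prob \<mu> {g. \<forall>j<n. g j x = a j} = fc_box n f a x"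
    using assms unfolding simulates_from_scratch_iff by blast
  obtain g where g: "g \<in> set_pmf \<mu>" using set_pmf_not_empty[of \<mu>] by blast
  have "odd (card {j. j < n \<and> g j x}) = f x" for x
  proof -
    have "0 < measure_pmf.prob \<mu> {g'. \<forall>j<n. g' j x = g j x}"
      using g by (intro measure_pmf_posI) auto
    then have "0 < fc_box n f (\<lambda>j. g j x) x" using prob by simp
    then show ?thesis unfolding fc_box_def by (simp split: if_splits)
  qed
  then show ?thesis using local g that by blast
qed

lemma Union_subset_if_n_J_eq_1:
  assumes "finite J" "{} \<notin> J" "n_J J = 1"
    and split: "\<forall>I\<in>J. I \<subseteq> K \<or> I \<inter> K = {}" and "I0 \<in> J" "I0 \<subseteq> K"
  shows "\<Union>J \<subseteq> K"
proof (rule ccontr)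
  assume "\<not> \<Union>J \<subseteq> K"
  then obtain I1 where "I1 \<in> J" "\<not> I1 \<subseteq> K" by blast
  define J1 where "J1 = {I\<in>J. I \<subseteq> K}"
  define J2 where "J2 = {I\<in>J. I \<inter> K = {}}"
  have "I0 \<in> J1" "I1 \<in> J2"
    using \<open>I0 \<in> J\<close> \<open>I0 \<subseteq> K\<close> \<open>I1 \<in> J\<close> \<open>\<not> I1 \<subseteq> K\<close> split unfolding J1_def J2_def by auto
  moreover have "J1 \<inter> J2 = {}"
  proof -
    have "I = {}" if "I \<subseteq> K" "I \<inter> K = {}" for I using that by blast
    then show ?thesis using \<open>{} \<notin> J\<close> unfolding J1_def J2_def by blast
  qed
  ultimately have "J1 \<noteq> J2" by blast
  have "disjoint_block_partition J {J1, J2}"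
    unfolding disjoint_block_partition_def
  proof (intro conjI)
    show "\<forall>B\<in>{J1, J2}. B \<noteq> {}" using \<open>I0 \<in> J1\<close> \<open>I1 \<in> J2\<close> by blast
    show "\<Union> {J1, J2} = J" using split unfolding J1_def J2_def by auto
    show "\<forall>B1\<in>{J1, J2}. \<forall>B2\<in>{J1, J2}. B1 \<noteq> B2 \<longrightarrow> B1 \<inter> B2 = {}"
      using \<open>J1 \<inter> J2 = {}\<close> by blast
    have "A \<inter> A' = {} \<and> A' \<inter> A = {}" if "A \<in> J1" "A' \<in> J2" for A A'
      using that unfolding J1_def J2_def by blast
    then show "\<forall>B1\<in>{J1, J2}. \<forall>B2\<in>{J1, J2}. B1 \<noteq> B2 \<longrightarrow> (\<forall>A\<in>B1. \<forall>A'\<in>B2. A \<inter> A' = {})"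
      by simp
  qed
  moreover have "{P. disjoint_block_partition J P} \<subseteq> Pow (Pow J)"
    unfolding disjoint_block_partition_def by blast
  then have "finite {P. disjoint_block_partition J P}"
    using \<open>finite J\<close> by (simp add: finite_subset)
  ultimately have "card {J1, J2} \<le> n_J J"
    unfolding n_J_def by (simp add: Max_ge)
  then show False using \<open>n_J J = 1\<close> \<open>J1 \<noteq> J2\<close> by simp
qed

lemma card_Union_monomials_J_le:
  assumes "simulates_from_scratch n C (fc_box n (anf_eval n c))" "finite C"
    and "n_J (monomials_J n c) = 1"
  shows "card (\<Union> (monomials_J n c)) \<le> card C + 1"
proof (cases "\<Union> (monomials_J n c) = {}")
  case False
  obtain g where g: "local_strategy n C g" "\<forall>x. odd (card {j. j < n \<and> g j x}) = anf_eval n c x"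
    using simulates_from_scratch_imp_local_strategy[OF assms(1)] by blast
  from False obtain v I0 where I0: "I0 \<in> monomials_J n c" "v \<in> I0" by blast
  define K where "K = (C \<union> C\<inverse>)\<^sup>* `` {v}"
  have closed: "(C \<union> C\<inverse>) `` K \<subseteq> K"
    unfolding K_def by (auto intro: rtrancl_into_rtrancl)
  have J: "I \<subseteq> {0..<n}" "c I" "2 \<le> card I" if "I \<in> monomials_J n c" for I
    using that unfolding monomials_J_def by auto
  have split: "\<forall>I\<in>monomials_J n c. I \<subseteq> K \<or> I \<inter> K = {}"
    using monomial_not_crossing_cut[OF g closed] J by blast
  have "\<Union> (monomials_J n c) \<subseteq> K"
  proof (rule Union_subset_if_n_J_eq_1[OF _ _ assms(3) split I0(1)])
    show "finite (monomials_J n c)"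
      by (rule finite_subset[of _ "Pow {0..<n}"]) (auto dest: J(1))
    show "{} \<notin> monomials_J n c" using J(3) by fastforce
    show "I0 \<subseteq> K" using split I0 unfolding K_def by blast
  qed
  moreover have "finite K" "card K \<le> card C + 1"
    using card_sym_rtrancl_Image_le[OF \<open>finite C\<close>, of "{v}"] unfolding K_def by auto
  ultimately show ?thesis by (meson card_mono order_trans)
qed (metis card.empty le0)

lemma card_Collect_insert:
  assumes "finite A" "x \<notin> A"
  shows "card {i\<in>insert x A. P i} = card {i\<in>A. P i} + (if P x then 1 else 0)"
proof -
  have "{i\<in>insert x A. P i} = (if P x then insert x {i\<in>A. P i} else {i\<in>A. P i})" by auto
  then show ?thesis using assms by simp
qed

lemma odd_card_Collect_neq:
  assumes "finite A"
  shows "odd (card {i\<in>A. p i \<noteq> q i}) = (odd (card {i\<in>A. p i}) \<noteq> odd (card {i\<in>A. q i}))"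
  using assms
proof (induction A rule: finite_induct)
  case (insert x A)
  then show ?case unfolding card_Collect_insert[OF insert.hyps] by simp argo
qed simp

lemma anf_eval_split:
  assumes "\<Union> (monomials_J n c) \<subseteq> W"
  shows "anf_eval n c x =
    (odd (card {S. S \<subseteq> {0..<n} \<and> c S \<and> S \<subseteq> W \<and> (\<forall>i\<in>S. x i)}) \<noteq>
     odd (card {j\<in>{0..<n}. j \<notin> W \<and> c {j} \<and> x j}))"
proof -
  define Inner where "Inner = {S. S \<subseteq> {0..<n} \<and> c S \<and> S \<subseteq> W \<and> (\<forall>i\<in>S. x i)}"
  define Outer where "Outer = {j\<in>{0..<n}. j \<notin> W \<and> c {j} \<and> x j}"
  have "S \<in> (\<lambda>j. {j}) ` Outer"
    if S: "S \<subseteq> {0..<n}" "c S" "\<forall>i\<in>S. x i" and "\<not> S \<subseteq> W" for S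
  proof -
    have "S \<notin> monomials_J n c" using assms \<open>\<not> S \<subseteq> W\<close> by blast
    then have "card S \<le> 1" using S unfolding monomials_J_def by auto
    moreover have "S \<noteq> {}" "finite S" using \<open>\<not> S \<subseteq> W\<close> S(1) finite_subset by auto
    ultimately have "card S = 1" by (simp add: le_Suc_eq)
    then obtain j where "S = {j}" by (rule card_1_singletonE)
    then show ?thesis using S \<open>\<not> S \<subseteq> W\<close> unfolding Outer_def by auto
  qed
  then have "{S. S \<subseteq> {0..<n} \<and> c S \<and> (\<forall>i\<in>S. x i)} = Inner \<union> (\<lambda>j. {j}) ` Outer"
    unfolding Inner_def Outer_def by blast
  moreover have "finite Inner"
    unfolding Inner_def by (rule finite_subset[of _ "Pow {0..<n}"]) auto
  moreover have "Inner \<inter> (\<lambda>j. {j}) ` Outer = {}" unfolding Inner_def Outer_def by auto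
  ultimately have "card {S. S \<subseteq> {0..<n} \<and> c S \<and> (\<forall>i\<in>S. x i)} = card Inner + card Outer"
    by (simp add: card_Un_disjoint card_image Outer_def)
  then show ?thesis unfolding anf_eval_def Inner_def Outer_def by simp
qed

text \<open>XOR secret sharing of t and the bits l: the outputs are uniform among the vectors
  with the right parity, because B is recovered from the outputs on A.\<close>
lemma measure_pmf_of_set_Pow_xor_shares:
  fixes A :: "'a set" and t :: bool and l a :: "'a \<Rightarrow> bool"
  assumes "finite A" "r \<notin> A"
  defines "out B j \<equiv> if j = r then t \<noteq> odd (card B) else (j \<in> B) \<noteq> l j"
  shows "measure_pmf.prob (pmf_of_set (Pow A)) {B. \<forall>j\<in>insert r A. out B j = a j} =
    (if odd (card {j\<in>insert r A. a j}) = (t \<noteq> odd (card {j\<in>A. l j})) then 1 / 2 ^ card A else 0)"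
proof -
  define B0 where "B0 = {j\<in>A. a j \<noteq> l j}"
  define cond where "cond \<longleftrightarrow> odd (card {j\<in>insert r A. a j}) = (t \<noteq> odd (card {j\<in>A. l j}))"
  have unique: "B = B0" if B: "B \<in> Pow A" and outs: "\<forall>j\<in>A. out B j = a j" for B
  proof -
    have "j \<in> B \<longleftrightarrow> a j \<noteq> l j" if "j \<in> A" for j
    proof -
      have "j \<noteq> r" using that \<open>r \<notin> A\<close> by blast
      then show ?thesis using bspec[OF outs that] unfolding out_def by auto
    qed
    then show ?thesis using B unfolding B0_def by auto
  qed
  have "out B0 r = a r \<longleftrightarrow> cond"
    using odd_card_Collect_neq[OF \<open>finite A\<close>, of a l] card_Collect_insert[OF assms(1,2), of a]
    unfolding out_def cond_def B0_def by auto
  moreover have "\<forall>j\<in>A. out B0 j = a j" using \<open>r \<notin> A\<close> unfolding out_def B0_def by auto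
  ultimately have event: "Pow A \<inter> {B. \<forall>j\<in>insert r A. out B j = a j} = (if cond then {B0} else {})"
    using unique unfolding B0_def by auto
  have "measure_pmf.prob (pmf_of_set (Pow A)) {B. \<forall>j\<in>insert r A. out B j = a j} =
        card (Pow A \<inter> {B. \<forall>j\<in>insert r A. out B j = a j}) / card (Pow A)"
    using \<open>finite A\<close> by (intro measure_pmf_of_set) auto
  then show ?thesis
    unfolding event cond_def[symmetric] using \<open>finite A\<close> by (simp add: card_Pow)
qed

lemma simulates_from_scratch_star:
  assumes "r \<in> W" "W \<subseteq> {0..<n}" and W: "\<Union> (monomials_J n c) \<subseteq> W"
  shows "simulates_from_scratch n ((\<lambda>i. (i, r)) ` (W - {r})) (fc_box n (anf_eval n c))"
proof -
  define C where "C = (\<lambda>i. (i, r)) ` (W - {r})"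
  define A where "A = {0..<n} - {r}"
  define F where "F x = odd (card {S. S \<subseteq> {0..<n} \<and> c S \<and> S \<subseteq> W \<and> (\<forall>i\<in>S. x i)})" for x
  define l where "l x j = (j \<notin> W \<and> c {j} \<and> x j)" for x j
  define G where "G B j x = (if j = r then F x \<noteq> odd (card B) else (j \<in> B) \<noteq> l x j)" for B j x
  have parties: "{0..<n} = insert r A" "r \<notin> A" "finite A" "card A = n - 1"
    using assms(1,2) unfolding A_def by auto
  have local: "local_strategy n C (G B)" for B
    unfolding local_strategy_def
  proof (intro allI impI)
    fix j and x y :: "nat \<Rightarrow> bool" assume agree: "\<forall>k. (k, j) \<in> C\<^sup>* \<longrightarrow> x k = y k"
    then have "F x = F y" if "j = r"
    proof -
      have "(k, r) \<in> C\<^sup>*" if "k \<in> W" for k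
        using that unfolding C_def by (cases "k = r") auto
      then have "\<forall>k\<in>W. x k = y k" using agree \<open>j = r\<close> by blast
      then show ?thesis unfolding F_def
        by (intro arg_cong[where f = "\<lambda>X. odd (card X)"] Collect_cong) (metis subsetD)
    qed
    then show "G B j x = G B j y" using agree unfolding G_def l_def by auto
  qed
  have "measure_pmf.prob (map_pmf G (pmf_of_set (Pow A))) {g. \<forall>j<n. g j x = a j} =
        fc_box n (anf_eval n c) a x" for a x
  proof -
    have "{j\<in>{0..<n}. j \<notin> W \<and> c {j} \<and> x j} = {j\<in>A. l x j}"
      using assms(1) unfolding A_def l_def by auto
    then have "anf_eval n c x = (F x \<noteq> odd (card {j\<in>A. l x j}))"
      using anf_eval_split[OF W, of x] unfolding F_def by simp
    moreover have "{j. j < n \<and> a j} = {j\<in>insert r A. a j}"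
      unfolding parties(1)[symmetric] by auto
    moreover have "G -` {g. \<forall>j<n. g j x = a j} = {B. \<forall>j\<in>insert r A. G B j x = a j}"
      unfolding parties(1)[symmetric] by auto
    ultimately show ?thesis
      using measure_pmf_of_set_Pow_xor_shares[OF parties(3,2), of "F x" "l x" a] parties(4)
      unfolding G_def fc_box_def measure_map_pmf by simp argo
  qed
  then show ?thesis
    unfolding simulates_from_scratch_iff C_def[symmetric] using local parties(3)
    by (intro exI[of _ "map_pmf G (pmf_of_set (Pow A))"]) auto
qed

lemma simulating_channels_exist:
  assumes "0 < n"
  obtains C where "C \<subseteq> channels n" "card C = card (\<Union> (monomials_J n c)) - 1"
    "simulates_from_scratch n C (fc_box n (anf_eval n c))"
proof -
  define U where "U = \<Union> (monomials_J n c)"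
  have "U \<subseteq> {0..<n}" unfolding U_def monomials_J_def by auto
  obtain W r where W: "r \<in> W" "W \<subseteq> {0..<n}" "U \<subseteq> W" "finite W" "card W - 1 = card U - 1"
  proof (cases "U = {}")
    case True
    then show ?thesis using that[of 0 "{0}"] \<open>0 < n\<close> by auto
  next
    case False
    then obtain r where "r \<in> U" by blast
    then show ?thesis using that[of r U] \<open>U \<subseteq> {0..<n}\<close> finite_subset by blast
  qed
  define C where "C = (\<lambda>i. (i, r)) ` (W - {r})"
  have "C \<subseteq> channels n" unfolding C_def channels_def using W(1,2) by auto
  moreover have "card C = card W - 1"
    unfolding C_def using W(1,4) by (subst card_image) (auto simp: inj_on_def)
  moreover have "simulates_from_scratch n C (fc_box n (anf_eval n c))"
    unfolding C_def using W(1-3) by (intro simulates_from_scratch_star) (auto simp: U_def)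
  ultimately show ?thesis using W(5) that unfolding U_def by auto
qed

lemma finite_channels: "finite (channels n)"
  by (rule finite_subset[of _ "{0..<n} \<times> {0..<n}"]) (auto simp: channels_def)

theorem theorem2:
  fixes n :: nat and c :: "nat set \<Rightarrow> bool"
  assumes "n \<ge> 2"
    and "n_J (monomials_J n c) = 1"
  shows "N_scratch_comm n (fc_box n (anf_eval n c)) = card (\<Union> (monomials_J n c)) - 1"
  unfolding N_scratch_comm_def
proof (rule Least_equality)
  obtain C where "C \<subseteq> channels n" "card C = card (\<Union> (monomials_J n c)) - 1"
    "simulates_from_scratch n C (fc_box n (anf_eval n c))"
    using simulating_channels_exist[of n c] \<open>n \<ge> 2\<close> by auto
  then show "\<exists>C. C \<subseteq> channels n \<and> card C = card (\<Union> (monomials_J n c)) - 1 \<and>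
      simulates_from_scratch n C (fc_box n (anf_eval n c))" by blast
next
  fix k assume "\<exists>C. C \<subseteq> channels n \<and> card C = k \<and> simulates_from_scratch n C (fc_box n (anf_eval n c))"
  then obtain C where "C \<subseteq> channels n" "card C = k" "simulates_from_scratch n C (fc_box n (anf_eval n c))"
    by blast
  moreover have "finite C" using \<open>C \<subseteq> channels n\<close> finite_channels finite_subset by blast
  ultimately show "card (\<Union> (monomials_J n c)) - 1 \<le> k"
    using card_Union_monomials_J_le[of n C c] \<open>n_J (monomials_J n c) = 1\<close> by linarith
qed

end
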